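(* Let $\lambda_N^1=\max(\lambda_{\max}(L_1),\lambda_{\max}(L_2))$ be the greatest of the largest Laplacian eigenvalues of the two layers. For $c\ge0$ define $$H(c)=\min_{w\ge0,\ w^T\boldsymbol 1=c}\ \big(\lambda_n[L(w)]-\lambda_2[L(w)]\big).$$ Then $H(c)\ge\lambda_N^1-\frac{2c}{N}$ for all $c\ge0$, and the inequality is strict for $c\neq0$.
   Context: A multiplex network consists of two layers $G_1,G_2$, simple undirected graphs on $N$ vertices each with Laplacians $L_1,L_2\in\mathbb{R}^{N\times N}$; the $i$-th vertex of $G_1$ is joined by an interlayer edge of weight $w_i\ge0$ to the $i$-th vertex of $G_2$. With $W=\operatorname{diag}(w)$ the multiplex Laplacian is $L(w)=\begin{bmatrix}L_1+W&-W\\-W&L_2+W\end{bmatrix}\in\mathbb{R}^{2N\times 2N}$, with eigenvalues $0=\lambda_1\le\lambda_2\le\dots\le\lambda_n$, $n=2N$. $\boldsymbol 1$ is the all-ones vector. *)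

theory Defs
  imports "Jordan_Normal_Form.Char_Poly" "HOL-Library.Multiset"
begin

definition simple_graph :: "nat \<Rightarrow> (nat \<Rightarrow> nat \<Rightarrow> bool) \<Rightarrow> bool" where
  "simple_graph N E \<longleftrightarrow> (\<forall>i<N. \<forall>j<N. E i j \<longleftrightarrow> E j i) \<and> (\<forall>i<N. \<not> E i i)"

definition laplacian :: "nat \<Rightarrow> (nat \<Rightarrow> nat \<Rightarrow> bool) \<Rightarrow> real mat" where
  "laplacian N E = mat N N (\<lambda>(i,j).
      if i = j then real (card {k. k < N \<and> E i k})
      else if E i j then -1 else 0)"

definition diag_w :: "nat \<Rightarrow> (nat \<Rightarrow> real) \<Rightarrow> real mat" where
  "diag_w N w = mat N N (\<lambda>(i,j). if i = j then w i else 0)"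

definition multiplex_laplacian :: "nat \<Rightarrow> real mat \<Rightarrow> real mat \<Rightarrow> (nat \<Rightarrow> real) \<Rightarrow> real mat" where
  "multiplex_laplacian N L1 L2 w =
     four_block_mat (L1 + diag_w N w) (- diag_w N w) (- diag_w N w) (L2 + diag_w N w)"

(* eigenvalues with multiplicity (roots of the characteristic polynomial),
   sorted increasingly: eigs A ! (k-1) = lambda_k *)
definition eigs :: "real mat \<Rightarrow> real list" where
  "eigs A = sorted_list_of_multiset (proots (char_poly A))"

definition eig :: "real mat \<Rightarrow> nat \<Rightarrow> real" where
  "eig A k = eigs A ! (k - 1)"

definition lambda_max :: "real mat \<Rightarrow> real" where
  "lambda_max A = eig A (dim_row A)"

definition H :: "nat \<Rightarrow> real mat \<Rightarrow> real mat \<Rightarrow> real \<Rightarrow> real" where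
  "H N L1 L2 c = (INF w \<in> {w. (\<forall>i<N. w i \<ge> 0) \<and> (\<Sum>i<N. w i) = c}.
       eig (multiplex_laplacian N L1 L2 w) (2*N) - eig (multiplex_laplacian N L1 L2 w) 2)"

end

theory Submission
  imports Defs "Jordan_Normal_Form.Schur_Decomposition"
    "HOL-Computational_Algebra.Fundamental_Theorem_Algebra"
begin

(* Let a = c/N be the mean interlayer weight. The vector (1, 1) spans a kernel direction of L(w),
   so Rayleigh quotients of vectors orthogonal to it bound lambda_2 from above, and any Rayleigh
   quotient bounds lambda_n from below. The test vector (1, -1) gives lambda_2 <= 2a, and (v, 0)
   or (0, v), with v a top eigenvector of a layer, gives lambda_n >= lambda_N^1 + sum_i w_i v_i^2.
   Strictness has to hold uniformly in w, since H is an infimum. If the weights are close to their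
   mean, sum_i (w_i - a)^2 <= a^2/4, then every w_i >= a/2 and lambda_n >= lambda_N^1 + a/2.
   Otherwise the tilted test vector (p, -p), p = 1 - (w - a)/B for a bound B on the layer spectra,
   has Rayleigh quotient at most 2a - a^2/(8 N B). *)

section \<open>Real symmetric matrices\<close>

lemma conjugate_real_vec [simp]: "conjugate (v :: real vec) = v"
  by (rule eq_vecI) auto

lemma scalar_prod_self_nonneg: "0 \<le> (v :: real vec) \<bullet> v"
  by (simp add: scalar_prod_def sum_nonneg)

lemma scalar_prod_self_pos:
  fixes v :: "real vec"
  assumes "v \<in> carrier_vec n" and "v \<noteq> 0\<^sub>v n"
  shows "0 < v \<bullet> v"
  using conjugate_square_greater_0_vec[OF assms(1)] assms(2) by simp

lemma scalar_prod_self_eq_sum_squares: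
  fixes v :: "real vec"
  assumes "v \<in> carrier_vec n"
  shows "v \<bullet> v = (\<Sum>i<n. (v $ i)\<^sup>2)"
  using assms by (simp add: scalar_prod_def lessThan_atLeast0 power2_eq_square)

lemma mat_diag_mult_vec:
  assumes "p \<in> carrier_vec n"
  shows "mat_diag n f *\<^sub>v p = vec n (\<lambda>i. f i * p $ i)"
proof (rule eq_vecI)
  fix i assume "i < dim_vec (vec n (\<lambda>i. f i * p $ i))"
  then have i: "i < n" by simp
  have "(mat_diag n f *\<^sub>v p) $ i = (\<Sum>j = 0..<n. (if i = j then f j else 0) * p $ j)"
    using assms i by (auto simp: mat_diag_def scalar_prod_def)
  also have "\<dots> = f i * p $ i" using i by (subst sum.remove[of _ i]) auto
  finally show "(mat_diag n f *\<^sub>v p) $ i = vec n (\<lambda>i. f i * p $ i) $ i" using i by simp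
qed (use assms in \<open>auto simp: mat_diag_def\<close>)

lemma orthonormal_extension:
  fixes v :: "real vec"
  assumes v: "v \<in> carrier_vec n" and unit: "v \<bullet> v = 1"
  shows "\<exists>W \<in> carrier_mat n n. W\<^sup>T * W = 1\<^sub>m n \<and> col W 0 = v"
proof -
  interpret cof_vec_space n "TYPE(real)" .
  have v0: "v \<noteq> 0\<^sub>v n" using unit v by auto
  then have n: "n \<noteq> 0" using v by auto
  define b where "b = basis_completion v"
  from basis_completion[OF v v0, folded b_def]
  have dist_b: "distinct b" and indep: "\<not> lin_dep (set b)" and b: "set b \<subseteq> carrier_vec n"
    and hd_b: "hd b = v" and len_b: "length b = n" by auto
  from hd_b len_b n obtain vs where bv: "b = v # vs" by (cases b) auto
  define ws where "ws = gram_schmidt n b"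
  from gram_schmidt_result[OF b dist_b indep refl, folded ws_def]
  have ws: "set ws \<subseteq> carrier_vec n" "corthogonal ws" "length ws = n" by (auto simp: len_b)
  have ws0: "ws ! 0 = v"
    using gram_schmidt_hd[OF v, of vs, folded bv ws_def] ws(3) n by (metis hd_conv_nth list.size(3))
  have ws_pos: "0 < ws ! i \<bullet> ws ! i" if "i < n" for i
    using corthogonalD[OF ws(2), of i i] that ws scalar_prod_self_nonneg[of "ws ! i"]
    by (simp add: order_le_neq_trans)
  define W where "W = mat_of_cols n (map (\<lambda>w. (1 / sqrt (w \<bullet> w)) \<cdot>\<^sub>v w) ws)"
  have W: "W \<in> carrier_mat n n" unfolding W_def using ws by auto
  have col_W: "col W i = (1 / sqrt (ws ! i \<bullet> ws ! i)) \<cdot>\<^sub>v ws ! i" if "i < n" for i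
    unfolding W_def using that ws by (subst col_mat_of_cols) auto
  have "W\<^sup>T * W = 1\<^sub>m n"
  proof (rule eq_matI)
    fix i j assume "i < dim_row (1\<^sub>m n)" and "j < dim_col (1\<^sub>m n)"
    then have i: "i < n" and j: "j < n" by auto
    have wsi: "ws ! i \<in> carrier_vec n" and wsj: "ws ! j \<in> carrier_vec n" using i j ws by auto
    have "(W\<^sup>T * W) $$ (i, j) = col W i \<bullet> col W j" using W i j by simp
    also have "\<dots> = (ws ! i \<bullet> ws ! j)
        / (sqrt (ws ! i \<bullet> ws ! i) * sqrt (ws ! j \<bullet> ws ! j))"
      using wsi wsj by (simp add: col_W i j smult_scalar_prod_distrib scalar_prod_smult_distrib)
    also have "\<dots> = 1\<^sub>m n $$ (i, j)"
      using corthogonalD[OF ws(2), of i j] ws_pos[OF i] i j ws(3)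
      by (cases "i = j") (auto simp: real_sqrt_mult[symmetric])
    finally show "(W\<^sup>T * W) $$ (i, j) = 1\<^sub>m n $$ (i, j)" .
  qed (use W in auto)
  moreover have "col W 0 = v" using col_W[of 0] n ws0 unit by simp
  ultimately show ?thesis using W by blast
qed

lemma real_symmetric_char_poly_has_root:
  fixes A :: "real mat"
  assumes A: "A \<in> carrier_mat n n" and sym: "A\<^sup>T = A" and n: "0 < n"
  shows "\<exists>x. poly (char_poly A) x = 0"
proof -
  define Ac where "Ac = map_mat complex_of_real A"
  have Ac: "Ac \<in> carrier_mat n n" using A unfolding Ac_def by auto
  have cp: "char_poly Ac = map_poly of_real (char_poly A)"
    unfolding Ac_def by (rule of_real_hom.char_poly_hom[OF A])
  have "degree (char_poly Ac) = n"
    unfolding cp of_real_hom.degree_map_poly_hom using degree_monic_char_poly[OF A] by simp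
  then have "\<not> constant (poly (char_poly Ac))" using n by (simp add: constant_degree)
  then obtain z where z: "poly (char_poly Ac) z = 0" using fundamental_theorem_of_algebra by blast
  then have "eigenvalue Ac z" using eigenvalue_root_char_poly[OF Ac] by simp
  then obtain v where v: "v \<in> carrier_vec n" "v \<noteq> 0\<^sub>v n" "Ac *\<^sub>v v = z \<cdot>\<^sub>v v"
    unfolding eigenvalue_def eigenvector_def using Ac by auto
  txt \<open>The Hermitian form \<open>v\<^sup>* A v\<close> is real and equals \<open>z |v|\<^sup>2\<close>,
    so \<open>z\<close> is real.\<close>
  have symA: "A $$ (i, j) = A $$ (j, i)" if "i < n" "j < n" for i j
    using sym that A by (metis carrier_matD index_transpose_mat(1))
  define s where "s = (\<Sum>i<n. \<Sum>j<n. cnj (v $ i) * of_real (A $$ (i, j)) * v $ j)"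
  have "cnj s = (\<Sum>i<n. \<Sum>j<n. v $ i * of_real (A $$ (i, j)) * cnj (v $ j))"
    unfolding s_def by simp
  also have "\<dots> = (\<Sum>j<n. \<Sum>i<n. v $ i * of_real (A $$ (i, j)) * cnj (v $ j))"
    by (rule sum.swap)
  also have "\<dots> = s" unfolding s_def
    by (intro sum.cong refl) (subst symA; auto simp: mult.commute mult.left_commute)
  finally have s_real: "cnj s = s" .
  define r where "r = (\<Sum>i<n. (cmod (v $ i))\<^sup>2)"
  have "s = (\<Sum>i<n. cnj (v $ i) * (Ac *\<^sub>v v) $ i)"
    unfolding s_def using A v(1)
    by (auto simp: Ac_def scalar_prod_def sum_distrib_left mult.assoc intro!: sum.cong)
  also have "\<dots> = z * (\<Sum>i<n. cnj (v $ i) * v $ i)"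
    using v by (simp add: sum_distrib_left algebra_simps)
  also have "(\<Sum>i<n. cnj (v $ i) * v $ i) = of_real r"
    unfolding r_def of_real_sum by (intro sum.cong refl) (metis complex_norm_square mult.commute)
  finally have s_eq: "s = z * of_real r" .
  obtain i where i: "i < n" "v $ i \<noteq> 0" using v(1,2) by (metis carrier_vecD eq_vecI index_zero_vec)
  have "0 < r" unfolding r_def
    by (rule sum_pos2[of _ i]) (use i in auto)
  then have "cnj z = z" using s_real s_eq by simp
  then have z_real: "z = of_real (Re z)" by (simp add: complex_eq_iff)
  have "of_real (poly (char_poly A) (Re z)) = (0 :: complex)"
    using z unfolding cp by (subst (asm) z_real) (simp only: of_real_hom.poly_map_poly)
  then show ?thesis by auto
qed

lemma orthogonal_mat_right_inverse:
  fixes W :: "'a :: field mat"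
  assumes "W \<in> carrier_mat n n" and "W\<^sup>T * W = 1\<^sub>m n"
  shows "W * W\<^sup>T = 1\<^sub>m n"
  using mat_mult_left_right_inverse[of "W\<^sup>T" n W] assms by auto

lemma orthogonal_similar_mat:
  fixes W :: "'a :: field mat"
  assumes W: "W \<in> carrier_mat n n" and WW: "W\<^sup>T * W = 1\<^sub>m n" and B: "B \<in> carrier_mat n n"
  shows "similar_mat (W * B * W\<^sup>T) B"
  using similar_mat_witI[of W "W\<^sup>T" n "W * B * W\<^sup>T" B] orthogonal_mat_right_inverse[OF W WW] WW W B
  unfolding similar_mat_def by auto

definition spectral_decomp :: "real mat \<Rightarrow> real mat \<Rightarrow> real list \<Rightarrow> nat \<Rightarrow> bool" where
  "spectral_decomp A U ds n \<longleftrightarrow>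
     U \<in> carrier_mat n n \<and> U\<^sup>T * U = 1\<^sub>m n \<and> length ds = n \<and> sorted ds
     \<and> A = U * mat_diag n (\<lambda>i. ds ! i) * U\<^sup>T"

lemma spectral_decompD:
  assumes "spectral_decomp A U ds n"
  shows "U \<in> carrier_mat n n" and "U\<^sup>T * U = 1\<^sub>m n" and "U * U\<^sup>T = 1\<^sub>m n"
    and "length ds = n" and "sorted ds" and "A = U * mat_diag n (\<lambda>i. ds ! i) * U\<^sup>T"
    and "A \<in> carrier_mat n n"
  using assms orthogonal_mat_right_inverse[of U n] unfolding spectral_decomp_def by auto

lemma char_poly_spectral_decomp:
  assumes d: "spectral_decomp A U ds n"
  shows "char_poly A = (\<Prod>d\<leftarrow>ds. [:- d, 1:])"
proof -
  let ?D = "mat_diag n (\<lambda>i. ds ! i)"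
  have "char_poly A = char_poly ?D"
    using orthogonal_similar_mat[of U n ?D] spectral_decompD[OF d]
    by (intro char_poly_similar) auto
  also have "\<dots> = (\<Prod>d\<leftarrow>diag_mat ?D. [:- d, 1:])"
    by (rule char_poly_upper_triangular[of _ n]) (auto simp: upper_triangular_def mat_diag_def)
  also have "diag_mat ?D = ds"
    using spectral_decompD(4)[OF d] by (intro nth_equalityI) (auto simp: diag_mat_def mat_diag_def)
  finally show ?thesis .
qed

lemma proots_prod_linear_factors: "proots (\<Prod>d\<leftarrow>ds. [:- d, 1 :: real:]) = mset ds"
proof (induction ds)
  case (Cons d ds)
  have "(\<Prod>d\<leftarrow>ds. [:- d, 1 :: real:]) \<noteq> 0" by (auto simp: prod_list_zero_iff)
  then have "proots ([:- d, 1:] * (\<Prod>d\<leftarrow>ds. [:- d, 1 :: real:]))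
      = proots [:- d, 1:] + proots (\<Prod>d\<leftarrow>ds. [:- d, 1 :: real:])"
    by (intro proots_mult) auto
  then show ?case using Cons by (simp add: proots_linear_factor)
qed simp

lemma eig_spectral_decomp:
  assumes d: "spectral_decomp A U ds n" and k: "1 \<le> k"
  shows "eig A k = ds ! (k - 1)"
  using spectral_decompD(5)[OF d]
  unfolding eig_def eigs_def char_poly_spectral_decomp[OF d] proots_prod_linear_factors
  by (simp add: sorted_sort_id)

lemma spectral_decomp_conj:
  assumes W: "W \<in> carrier_mat n n" and WW: "W\<^sup>T * W = 1\<^sub>m n" and d: "spectral_decomp B V ds n"
  shows "spectral_decomp (W * B * W\<^sup>T) (W * V) ds n"
proof -
  note V = spectral_decompD[OF d]
  let ?D = "mat_diag n (\<lambda>i. ds ! i)"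
  have D: "?D \<in> carrier_mat n n" by simp
  have WV_T: "(W * V)\<^sup>T = V\<^sup>T * W\<^sup>T" using transpose_mult[OF W V(1)] .
  have "(W * V)\<^sup>T * (W * V) = V\<^sup>T * (W\<^sup>T * W) * V"
    unfolding WV_T using W V(1) by (simp add: assoc_mult_mat[of _ n n _ n _ n])
  also have "\<dots> = 1\<^sub>m n" using WW V by simp
  finally have orth: "(W * V)\<^sup>T * (W * V) = 1\<^sub>m n" .
  have "W * B * W\<^sup>T = (W * V) * ?D * (W * V)\<^sup>T"
    unfolding WV_T V(6) using W V(1) D
    by (simp add: assoc_mult_mat[of _ n n _ n _ n] mult_carrier_mat[of _ n n _ n])
  then show ?thesis using orth W V unfolding spectral_decomp_def by auto
qed

lemma spectral_decomp_four_block: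
  assumes d: "spectral_decomp A3 U ds n" and sorted: "sorted (e # ds)"
  shows "spectral_decomp (four_block_mat (mat 1 1 (\<lambda>_. e)) (0\<^sub>m 1 n) (0\<^sub>m n 1) A3)
           (four_block_mat (1\<^sub>m 1) (0\<^sub>m 1 n) (0\<^sub>m n 1) U) (e # ds) (Suc n)"
proof -
  note U = spectral_decompD[OF d]
  let ?V = "four_block_mat (1\<^sub>m 1) (0\<^sub>m 1 n) (0\<^sub>m n 1) U"
  let ?\<Lambda> = "mat 1 1 (\<lambda>_. e) :: real mat"
  let ?D = "mat_diag n (\<lambda>i. ds ! i)"
  have V: "?V \<in> carrier_mat (Suc n) (Suc n)" using U by auto
  have V_T: "?V\<^sup>T = four_block_mat (1\<^sub>m 1) (0\<^sub>m 1 n) (0\<^sub>m n 1) U\<^sup>T"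
    using U by (subst transpose_four_block_mat[of _ 1 1 _ n _ n]) auto
  have "?V\<^sup>T * ?V = four_block_mat (1\<^sub>m 1) (0\<^sub>m 1 n) (0\<^sub>m n 1) (1\<^sub>m n)"
    unfolding V_T using U by (subst mult_four_block_mat[of _ 1 1 _ n _ n]) auto
  then have orth: "?V\<^sup>T * ?V = 1\<^sub>m (Suc n)" by simp
  have blocks: "1\<^sub>m 1 \<in> carrier_mat 1 1" "?\<Lambda> \<in> carrier_mat 1 1"
    "0\<^sub>m 1 n \<in> carrier_mat 1 n" "0\<^sub>m n 1 \<in> carrier_mat n 1"
    "?D \<in> carrier_mat n n" "U * ?D \<in> carrier_mat n n"
    using U by auto
  have "?V * four_block_mat ?\<Lambda> (0\<^sub>m 1 n) (0\<^sub>m n 1) ?D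
      = four_block_mat ?\<Lambda> (0\<^sub>m 1 n) (0\<^sub>m n 1) (U * ?D)"
    by (subst mult_four_block_mat[OF blocks(1,3,4) U(1) blocks(2,3,4,5)])
      (use blocks U in \<open>auto simp: left_mult_zero_mat[OF blocks(5)]\<close>)
  also have "\<dots> * ?V\<^sup>T = four_block_mat ?\<Lambda> (0\<^sub>m 1 n) (0\<^sub>m n 1) (U * ?D * U\<^sup>T)"
    unfolding V_T
    by (subst mult_four_block_mat[OF blocks(2,3,4,6) blocks(1,3,4)])
      (use blocks U in \<open>auto simp: right_mult_zero_mat[OF blocks(6)]\<close>)
  finally have "?V * four_block_mat ?\<Lambda> (0\<^sub>m 1 n) (0\<^sub>m n 1) ?D * ?V\<^sup>T
      = four_block_mat ?\<Lambda> (0\<^sub>m 1 n) (0\<^sub>m n 1) A3"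
    using U(6) by simp
  moreover have "four_block_mat ?\<Lambda> (0\<^sub>m 1 n) (0\<^sub>m n 1) ?D
      = mat_diag (Suc n) (\<lambda>i. (e # ds) ! i)"
    by (rule eq_matI) (auto simp: mat_diag_def)
  ultimately show ?thesis
    using V orth U sorted unfolding spectral_decomp_def by auto
qed

lemma eigenvalue_unit_eigenvector:
  fixes A :: "real mat"
  assumes A: "A \<in> carrier_mat n n" and "eigenvalue A e"
  shows "\<exists>v \<in> carrier_vec n. v \<bullet> v = 1 \<and> A *\<^sub>v v = e \<cdot>\<^sub>v v"
proof -
  obtain u where u: "u \<in> carrier_vec n" "u \<noteq> 0\<^sub>v n" "A *\<^sub>v u = e \<cdot>\<^sub>v u"
    using assms unfolding eigenvalue_def eigenvector_def by auto
  define v where "v = (1 / sqrt (u \<bullet> u)) \<cdot>\<^sub>v u"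
  have pos: "0 < u \<bullet> u" using scalar_prod_self_pos[OF u(1,2)] .
  have "v \<bullet> v = 1"
    unfolding v_def using u(1) pos by (simp add: smult_scalar_prod_distrib scalar_prod_smult_distrib)
  moreover have "A *\<^sub>v v = e \<cdot>\<^sub>v v"
    unfolding v_def using u A by (simp add: mult_mat_vec smult_smult_assoc mult.commute)
  moreover have "v \<in> carrier_vec n" unfolding v_def using u(1) by simp
  ultimately show ?thesis by blast
qed

lemma orthogonal_deflation:
  fixes A W :: "real mat"
  assumes A: "A \<in> carrier_mat (Suc n) (Suc n)" and sym: "A\<^sup>T = A"
    and W: "W \<in> carrier_mat (Suc n) (Suc n)" and WW: "W\<^sup>T * W = 1\<^sub>m (Suc n)"
    and eigen: "A *\<^sub>v col W 0 = e \<cdot>\<^sub>v col W 0"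
  shows "\<exists>A3 \<in> carrier_mat n n. A3\<^sup>T = A3 \<and>
           A = W * four_block_mat (mat 1 1 (\<lambda>_. e)) (0\<^sub>m 1 n) (0\<^sub>m n 1) A3 * W\<^sup>T"
proof -
  let ?m = "Suc n"
  define B where "B = W\<^sup>T * (A * W)"
  have WT: "W\<^sup>T \<in> carrier_mat ?m ?m" using W by simp
  have B: "B \<in> carrier_mat ?m ?m" unfolding B_def using W A by simp
  have "B\<^sup>T = (A * W)\<^sup>T * W"
    unfolding B_def using transpose_mult[OF WT, of "A * W" ?m] W A by simp
  also have "(A * W)\<^sup>T = W\<^sup>T * A" using transpose_mult[OF A W] sym by simp
  finally have "B\<^sup>T = B" unfolding B_def using W A by (simp add: assoc_mult_mat[of _ ?m ?m _ ?m _ ?m])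
  then have B_sym: "B $$ (i, j) = B $$ (j, i)" if "i < ?m" "j < ?m" for i j
    using that B by (metis carrier_matD index_transpose_mat(1))
  have B_col0: "B $$ (i, 0) = (if i = 0 then e else 0)" if i: "i < ?m" for i
  proof -
    have "B $$ (i, 0) = col W i \<bullet> (A *\<^sub>v col W 0)"
      unfolding B_def using W A i by (simp add: mult_mat_vec_def)
    also have "\<dots> = e * (W\<^sup>T * W) $$ (i, 0)" unfolding eigen using W i by simp
    finally show ?thesis using WW i by simp
  qed
  define A3 where "A3 = mat n n (\<lambda>(i, j). B $$ (Suc i, Suc j))"
  have A3: "A3 \<in> carrier_mat n n" unfolding A3_def by simp
  have "A3\<^sup>T = A3" unfolding A3_def using B_sym by (intro eq_matI) auto
  moreover have "B = four_block_mat (mat 1 1 (\<lambda>_. e)) (0\<^sub>m 1 n) (0\<^sub>m n 1) A3"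
  proof (rule eq_matI)
    fix i j assume "i < dim_row (four_block_mat (mat 1 1 (\<lambda>_. e)) (0\<^sub>m 1 n) (0\<^sub>m n 1) A3)"
      and "j < dim_col (four_block_mat (mat 1 1 (\<lambda>_. e)) (0\<^sub>m 1 n) (0\<^sub>m n 1) A3)"
    then have i: "i < ?m" and j: "j < ?m" using A3 by auto
    show "B $$ (i, j) = four_block_mat (mat 1 1 (\<lambda>_. e)) (0\<^sub>m 1 n) (0\<^sub>m n 1) A3 $$ (i, j)"
      using B_col0[OF i] B_col0[OF j] B_sym[OF i j] i j A3
      by (cases i; cases j) (auto simp: A3_def)
  qed (use B A3 in auto)
  moreover have "W * B * W\<^sup>T = A"
  proof -
    have "W * B * W\<^sup>T = (W * W\<^sup>T) * A * (W * W\<^sup>T)"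
      unfolding B_def using W A
      by (simp add: assoc_mult_mat[of _ ?m ?m _ ?m _ ?m] mult_carrier_mat[of _ ?m ?m _ ?m])
    then show ?thesis using orthogonal_mat_right_inverse[OF W WW] A by simp
  qed
  ultimately show ?thesis using A3 by auto
qed

theorem real_symmetric_spectral_decomp:
  fixes A :: "real mat"
  assumes "A \<in> carrier_mat n n" and "A\<^sup>T = A"
  shows "\<exists>U ds. spectral_decomp A U ds n"
  using assms
proof (induction n arbitrary: A)
  case 0
  then show ?case
    unfolding spectral_decomp_def by (intro exI[of _ "1\<^sub>m 0"] exI[of _ "[]"]) (auto intro!: eq_matI)
next
  case (Suc n)
  have A: "A \<in> carrier_mat (Suc n) (Suc n)" and sym: "A\<^sup>T = A" by fact+
  txt \<open>Deflating along an eigenvector of the least eigenvalue keeps the eigenvalue list sorted.\<close>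
  let ?R = "{x. poly (char_poly A) x = 0}"
  have "char_poly A \<noteq> 0" using degree_monic_char_poly[OF A] by auto
  then have fin: "finite ?R" by (rule poly_roots_finite)
  have ne: "?R \<noteq> {}" using real_symmetric_char_poly_has_root[OF A sym] by auto
  define e where "e = Min ?R"
  have root: "poly (char_poly A) e = 0" unfolding e_def using Min_in[OF fin ne] by simp
  have least: "e \<le> x" if "poly (char_poly A) x = 0" for x unfolding e_def using Min_le[OF fin] that by simp
  obtain v where v: "v \<in> carrier_vec (Suc n)" "v \<bullet> v = 1" "A *\<^sub>v v = e \<cdot>\<^sub>v v"
    using eigenvalue_unit_eigenvector[OF A] eigenvalue_root_char_poly[OF A] root by blast
  obtain W where W: "W \<in> carrier_mat (Suc n) (Suc n)" "W\<^sup>T * W = 1\<^sub>m (Suc n)" "col W 0 = v"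
    using orthonormal_extension[OF v(1,2)] by blast
  obtain A3 where A3: "A3 \<in> carrier_mat n n" "A3\<^sup>T = A3"
    and A_eq: "A = W * four_block_mat (mat 1 1 (\<lambda>_. e)) (0\<^sub>m 1 n) (0\<^sub>m n 1) A3 * W\<^sup>T"
    using orthogonal_deflation[OF A sym W(1,2)] v(3) W(3) by blast
  obtain U ds where d: "spectral_decomp A3 U ds n" using Suc.IH[OF A3] by blast
  have "e \<le> d" if "d \<in> set ds" for d
  proof (rule least)
    let ?B = "four_block_mat (mat 1 1 (\<lambda>_. e)) (0\<^sub>m 1 n) (0\<^sub>m n 1) A3"
    have "?B \<in> carrier_mat (Suc n) (Suc n)" using A3 by auto
    then have "char_poly A = char_poly ?B"
      unfolding A_eq by (intro char_poly_similar orthogonal_similar_mat[OF W(1,2)])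
    also have "\<dots> = char_poly (mat 1 1 (\<lambda>_. e)) * char_poly A3"
      by (rule char_poly_four_block_zeros_col) (use A3 in auto)
    finally have "char_poly A = char_poly (mat 1 1 (\<lambda>_. e)) * char_poly A3" .
    moreover have "poly (char_poly A3) d = 0"
      unfolding char_poly_spectral_decomp[OF d] using that by (auto simp: poly_prod_list_zero_iff)
    ultimately show "poly (char_poly A) d = 0" by simp
  qed
  then have "sorted (e # ds)" using spectral_decompD(5)[OF d] by simp
  from spectral_decomp_conj[OF W(1,2) spectral_decomp_four_block[OF d this]]
  show ?case unfolding A_eq[symmetric] by blast
qed

section \<open>Rayleigh quotients\<close>

definition quad_form :: "real mat \<Rightarrow> real vec \<Rightarrow> real" where
  "quad_form A x = x \<bullet> (A *\<^sub>v x)"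

lemma quad_form_spectral_decomp:
  assumes d: "spectral_decomp A U ds n" and x: "x \<in> carrier_vec n"
  shows "quad_form A x = (\<Sum>i<n. ds ! i * ((U\<^sup>T *\<^sub>v x) $ i)\<^sup>2)"
    and "x \<bullet> x = (\<Sum>i<n. ((U\<^sup>T *\<^sub>v x) $ i)\<^sup>2)"
proof -
  note U = spectral_decompD[OF d]
  let ?D = "mat_diag n (\<lambda>i. ds ! i)"
  define y where "y = U\<^sup>T *\<^sub>v x"
  have y: "y \<in> carrier_vec n" unfolding y_def using U(1) x by simp
  have Dy: "?D *\<^sub>v y \<in> carrier_vec n" by (rule mult_mat_vec_carrier[OF mat_diag_dim y])
  have "A *\<^sub>v x = U *\<^sub>v (?D *\<^sub>v y)"
    unfolding U(6) y_def using U(1) x by (simp add: assoc_mult_mat_vec[of _ n n _ n])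
  then have "quad_form A x = y \<bullet> (?D *\<^sub>v y)"
    unfolding quad_form_def using transpose_vec_mult_scalar[OF U(1) Dy x] y_def by simp
  also have "\<dots> = (\<Sum>i<n. ds ! i * (y $ i)\<^sup>2)"
    using y by (simp add: mat_diag_mult_vec scalar_prod_def lessThan_atLeast0 power2_eq_square ac_simps)
  finally show "quad_form A x = (\<Sum>i<n. ds ! i * ((U\<^sup>T *\<^sub>v x) $ i)\<^sup>2)" unfolding y_def .
  have "U *\<^sub>v y = x"
    unfolding y_def using U x by (simp add: assoc_mult_mat_vec[symmetric, of _ n n _ n])
  then have "x \<bullet> x = y \<bullet> y" using transpose_vec_mult_scalar[OF U(1) y x] by (simp add: y_def)
  then show "x \<bullet> x = (\<Sum>i<n. ((U\<^sup>T *\<^sub>v x) $ i)\<^sup>2)"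
    using scalar_prod_self_eq_sum_squares[OF y] unfolding y_def by simp
qed

lemma quad_form_le_eig_max:
  fixes A :: "real mat"
  assumes A: "A \<in> carrier_mat n n" "A\<^sup>T = A" and n: "0 < n" and x: "x \<in> carrier_vec n"
  shows "quad_form A x \<le> eig A n * (x \<bullet> x)"
proof -
  obtain U ds where d: "spectral_decomp A U ds n" using real_symmetric_spectral_decomp[OF A] by blast
  note U = spectral_decompD[OF d]
  have "quad_form A x = (\<Sum>i<n. ds ! i * ((U\<^sup>T *\<^sub>v x) $ i)\<^sup>2)"
    using quad_form_spectral_decomp(1)[OF d x] .
  also have "\<dots> \<le> (\<Sum>i<n. ds ! (n - 1) * ((U\<^sup>T *\<^sub>v x) $ i)\<^sup>2)"
    using U(4,5) by (intro sum_mono mult_right_mono sorted_nth_mono) auto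
  also have "\<dots> = eig A n * (x \<bullet> x)"
    using quad_form_spectral_decomp(2)[OF d x] eig_spectral_decomp[OF d, of n] n
    by (simp add: sum_distrib_left)
  finally show ?thesis .
qed

lemma eig_max_attained:
  fixes A :: "real mat"
  assumes A: "A \<in> carrier_mat n n" "A\<^sup>T = A" and n: "0 < n"
  shows "\<exists>v \<in> carrier_vec n. v \<bullet> v = 1 \<and> quad_form A v = eig A n"
proof -
  obtain U ds where d: "spectral_decomp A U ds n" using real_symmetric_spectral_decomp[OF A] by blast
  note U = spectral_decompD[OF d]
  define v where "v = U *\<^sub>v unit_vec n (n - 1)"
  have v: "v \<in> carrier_vec n" unfolding v_def using U(1) by simp
  have "U\<^sup>T *\<^sub>v v = unit_vec n (n - 1)"
    unfolding v_def using U by (simp add: assoc_mult_mat_vec[symmetric, of _ n n _ n])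
  then have coord: "(\<Sum>i<n. f i * ((U\<^sup>T *\<^sub>v v) $ i)\<^sup>2) = f (n - 1)"
    for f :: "nat \<Rightarrow> real"
    using n by (simp add: unit_vec_def) (subst sum.remove[of _ "n - Suc 0"]; simp)
  show ?thesis
    using quad_form_spectral_decomp[OF d v] coord[of "\<lambda>_. 1"] coord[of "\<lambda>i. ds ! i"]
      eig_spectral_decomp[OF d, of n] n v by auto
qed

lemma spectral_decomp_second_le_quad_form:
  assumes d: "spectral_decomp A U ds n" and n: "2 \<le> n"
    and z: "z \<in> carrier_vec n" and z_perp: "z \<bullet> col U 0 = 0"
  shows "ds ! 1 * (z \<bullet> z) \<le> quad_form A z"
proof -
  note U = spectral_decompD[OF d]
  have "col U 0 \<in> carrier_vec n" using col_dim[of U 0] U(1) by simp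
  then have y0: "(U\<^sup>T *\<^sub>v z) $ 0 = 0"
    using U(1) z z_perp n comm_scalar_prod[OF z] by simp
  have "ds ! 1 * ((U\<^sup>T *\<^sub>v z) $ i)\<^sup>2 \<le> ds ! i * ((U\<^sup>T *\<^sub>v z) $ i)\<^sup>2"
    if "i < n" for i
  proof (cases "i = 0")
    case False
    then show ?thesis using U(4,5) that by (intro mult_right_mono sorted_nth_mono) auto
  qed (simp add: y0)
  then have "ds ! 1 * (z \<bullet> z) \<le> (\<Sum>i<n. ds ! i * ((U\<^sup>T *\<^sub>v z) $ i)\<^sup>2)"
    unfolding quad_form_spectral_decomp(2)[OF d z] sum_distrib_left by (intro sum_mono) auto
  then show ?thesis using quad_form_spectral_decomp(1)[OF d z] by simp
qed

lemma quad_form_add_kernel: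
  fixes A :: "real mat"
  assumes A: "A \<in> carrier_mat n n" "A\<^sup>T = A"
    and u: "u \<in> carrier_vec n" "A *\<^sub>v u = 0\<^sub>v n" and x: "x \<in> carrier_vec n"
  shows "quad_form A (a \<cdot>\<^sub>v u + b \<cdot>\<^sub>v x) = b\<^sup>2 * quad_form A x"
proof -
  have "u \<bullet> (A *\<^sub>v x) = (A\<^sup>T *\<^sub>v u) \<bullet> x"
    using transpose_vec_mult_scalar[OF A(1) x u(1)] by simp
  then have uAx: "u \<bullet> (A *\<^sub>v x) = 0" using A u x by simp
  have "A *\<^sub>v (a \<cdot>\<^sub>v u + b \<cdot>\<^sub>v x) = b \<cdot>\<^sub>v (A *\<^sub>v x)"
    using A u x by (simp add: mult_add_distrib_mat_vec[of _ n n] mult_mat_vec)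
      (rule eq_vecI; use A x in auto)
  then show ?thesis
    unfolding quad_form_def using A u x uAx
    by (simp add: add_scalar_prod_distrib[of _ n] smult_scalar_prod_distrib scalar_prod_smult_distrib
        power2_eq_square)
qed

lemma eig_2_le_quad_form:
  fixes A :: "real mat"
  assumes A: "A \<in> carrier_mat n n" "A\<^sup>T = A" and n: "2 \<le> n"
    and u: "u \<in> carrier_vec n" "u \<noteq> 0\<^sub>v n" "A *\<^sub>v u = 0\<^sub>v n"
    and x: "x \<in> carrier_vec n" "x \<bullet> u = 0"
  shows "eig A 2 * (x \<bullet> x) \<le> max 0 (quad_form A x)"
proof -
  obtain U ds where d: "spectral_decomp A U ds n" using real_symmetric_spectral_decomp[OF A] by blast
  have eig2: "eig A 2 = ds ! 1" using eig_spectral_decomp[OF d, of 2] by simp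
  let ?e = "col U 0"
  have e: "?e \<in> carrier_vec n" using col_dim[of U 0] spectral_decompD(1)[OF d] by simp
  show ?thesis
  proof (cases "x \<bullet> ?e = 0")
    case True
    then show ?thesis using spectral_decomp_second_le_quad_form[OF d n x(1)] eig2 by simp
  next
    case False
    txt \<open>Courant--Fischer on the plane spanned by \<open>u\<close> and \<open>x\<close>: it contains a
      nonzero vector orthogonal to the first eigenvector.\<close>
    define a where "a = x \<bullet> ?e"
    define b where "b = - (u \<bullet> ?e)"
    define z where "z = a \<cdot>\<^sub>v u + b \<cdot>\<^sub>v x"
    have z: "z \<in> carrier_vec n" unfolding z_def using u x by simp
    have "z \<bullet> ?e = 0"
      unfolding z_def a_def b_def using u x e
      by (simp add: add_scalar_prod_distrib[of _ n] smult_scalar_prod_distrib)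
    then have "ds ! 1 * (z \<bullet> z) \<le> quad_form A z"
      by (rule spectral_decomp_second_le_quad_form[OF d n z])
    moreover have "quad_form A z = b\<^sup>2 * quad_form A x"
      unfolding z_def by (rule quad_form_add_kernel[OF A u(1,3) x(1)])
    moreover have "z \<bullet> z = a\<^sup>2 * (u \<bullet> u) + b\<^sup>2 * (x \<bullet> x)"
      unfolding z_def using u x comm_scalar_prod[OF x(1) u(1)]
      by (simp add: add_scalar_prod_distrib[of _ n] scalar_prod_add_distrib[of _ n]
          smult_scalar_prod_distrib scalar_prod_smult_distrib power2_eq_square)
    ultimately have key:
      "ds ! 1 * (a\<^sup>2 * (u \<bullet> u)) + b\<^sup>2 * (ds ! 1 * (x \<bullet> x)) \<le> b\<^sup>2 * quad_form A x"
      by (simp add: algebra_simps)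
    have "0 < a\<^sup>2 * (u \<bullet> u)" using False scalar_prod_self_pos[OF u(1,2)] unfolding a_def by simp
    then have "ds ! 1 \<le> 0 \<or> b\<^sup>2 * (ds ! 1 * (x \<bullet> x)) < b\<^sup>2 * quad_form A x"
      using key by (smt (verit) mult_pos_pos)
    then have "ds ! 1 \<le> 0 \<or> ds ! 1 * (x \<bullet> x) \<le> quad_form A x"
      using mult_less_cancel_left[of "b\<^sup>2" "ds ! 1 * (x \<bullet> x)" "quad_form A x"] by auto
    then show ?thesis
      using eig2 mult_nonpos_nonneg[OF _ scalar_prod_self_nonneg, of "ds ! 1" x] by auto
  qed
qed

section \<open>Graph and multiplex Laplacians\<close>

lemma laplacian_carrier [simp]: "laplacian N E \<in> carrier_mat N N"
  unfolding laplacian_def by simp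

lemma laplacian_symmetric:
  assumes "simple_graph N E"
  shows "(laplacian N E)\<^sup>T = laplacian N E"
  using assms unfolding simple_graph_def laplacian_def by (auto intro!: eq_matI)

lemma laplacian_mult_ones:
  assumes g: "simple_graph N E"
  shows "laplacian N E *\<^sub>v vec N (\<lambda>_. 1) = 0\<^sub>v N"
proof (rule eq_vecI)
  fix i assume "i < dim_vec (0\<^sub>v N :: real vec)"
  then have i: "i < N" by simp
  have no_loop: "\<not> E i i" using g i unfolding simple_graph_def by simp
  let ?deg = "real (card {k. k < N \<and> E i k})"
  have "(laplacian N E *\<^sub>v vec N (\<lambda>_. 1)) $ i
      = (\<Sum>j = 0..<N. (if j = i then ?deg else 0) - (if E i j then 1 else 0))"
    using i no_loop by (auto simp: laplacian_def scalar_prod_def intro!: sum.cong)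
  also have "\<dots> = ?deg - (\<Sum>j = 0..<N. if E i j then 1 else 0)"
    using i by (simp add: sum_subtractf)
  also have "(\<Sum>j = 0..<N. if E i j then 1 else 0 :: real) = real (card {k. k < N \<and> E i k})"
    by (simp add: sum.If_cases Int_def atLeast0LessThan conj_commute)
  finally show "(laplacian N E *\<^sub>v vec N (\<lambda>_. 1)) $ i = 0\<^sub>v N $ i" using i by simp
qed (simp add: laplacian_def)

lemma diag_w_eq_mat_diag: "diag_w N w = mat_diag N w"
  unfolding diag_w_def mat_diag_def by (rule eq_matI) auto

lemma sum_tilted_squares:
  fixes w :: "nat \<Rightarrow> real"
  assumes w: "\<forall>i<N. 0 \<le> w i" and c: "(\<Sum>i<N. w i) = c" and a: "a * N = c"
  shows "(\<Sum>i<N. (1 - t * (w i - a))\<^sup>2) = N + t\<^sup>2 * (\<Sum>i<N. (w i - a)\<^sup>2)"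
    and "(\<Sum>i<N. w i * (1 - t * (w i - a))\<^sup>2)
      \<le> c - 2 * t * (\<Sum>i<N. (w i - a)\<^sup>2) + t\<^sup>2 * (c * (\<Sum>i<N. (w i - a)\<^sup>2))"
proof -
  let ?D = "\<Sum>i<N. (w i - a)\<^sup>2"
  have dev: "(\<Sum>i<N. w i - a) = 0" using c a by (simp add: sum_subtractf mult.commute)
  have "(\<Sum>i<N. (1 - t * (w i - a))\<^sup>2)
      = (\<Sum>i<N. 1 - 2 * t * (w i - a) + t\<^sup>2 * (w i - a)\<^sup>2)"
    by (intro sum.cong) (auto simp: power2_eq_square algebra_simps)
  also have "\<dots> = N + t\<^sup>2 * ?D"
    using dev by (simp add: sum.distrib sum_subtractf sum_distrib_left[symmetric] mult.assoc)
  finally show "(\<Sum>i<N. (1 - t * (w i - a))\<^sup>2) = N + t\<^sup>2 * ?D" .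
  have "(\<Sum>i<N. w i * (w i - a)) = (\<Sum>i<N. (w i - a)\<^sup>2 + a * (w i - a))"
    by (intro sum.cong) (auto simp: power2_eq_square algebra_simps)
  then have weighted_dev: "(\<Sum>i<N. w i * (w i - a)) = ?D"
    using dev by (simp add: sum.distrib sum_distrib_left[symmetric])
  have "(\<Sum>i<N. w i * (1 - t * (w i - a))\<^sup>2)
      = (\<Sum>i<N. w i - 2 * t * (w i * (w i - a)) + t\<^sup>2 * (w i * (w i - a)\<^sup>2))"
    by (intro sum.cong) (auto simp: power2_eq_square algebra_simps)
  also have "\<dots> = c - 2 * t * ?D + t\<^sup>2 * (\<Sum>i<N. w i * (w i - a)\<^sup>2)"
    using c weighted_dev by (simp add: sum.distrib sum_subtractf sum_distrib_left[symmetric])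
  also have "(\<Sum>i<N. w i * (w i - a)\<^sup>2) \<le> c * ?D"
    unfolding sum_distrib_left using member_le_sum[of _ "{..<N}" w] w c
    by (intro sum_mono mult_right_mono) auto
  finally show "(\<Sum>i<N. w i * (1 - t * (w i - a))\<^sup>2) \<le> c - 2 * t * ?D + t\<^sup>2 * (c * ?D)"
    by (simp add: mult_left_mono)
qed

text \<open>The final step of the second-eigenvalue estimate: \<open>s\<close> is \<open>\<lambda>\<^sub>2\<close>, \<open>a\<close> the mean
  weight, \<open>D\<close> the spread of the weights and \<open>t\<close> the tilt of the test vector.\<close>

lemma perturbation_quotient_bound:
  fixes s a t n D :: real
  assumes n: "1 \<le> n" and a: "0 < a" and t: "0 < t" "a * t \<le> 1" and D: "a\<^sup>2 / 4 < D"
    and s: "s * (2 * n + 2 * t\<^sup>2 * D) \<le> max 0 (4 * a * n - 7 * t * D)"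
  shows "s \<le> 2 * a - t * a\<^sup>2 / (8 * n)"
proof -
  define e where "e = t * a\<^sup>2 / (8 * n)"
  define X where "X = 2 * n + 2 * t\<^sup>2 * D"
  have "0 < a\<^sup>2 / 4" using a by simp
  then have D_pos: "0 < D" using D by linarith
  have X_pos: "0 < X" unfolding X_def using n D_pos by (simp add: add_pos_nonneg)
  have "t * a\<^sup>2 \<le> a"
    using mult_right_mono[OF t(2), of a] a by (simp add: power2_eq_square algebra_simps)
  moreover have "a \<le> a * n" using mult_left_mono[OF n, of a] a by simp
  ultimately have "t * a\<^sup>2 \<le> a * n" by linarith
  then have e_le: "e \<le> a / 8" unfolding e_def using n by (simp add: field_simps)
  have "2 * n * e = t * a\<^sup>2 / 4" unfolding e_def using n by (simp add: field_simps)
  also have "\<dots> < t * D" using D t by (simp add: field_simps)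
  finally have ne: "2 * n * e < t * D" .
  have "2 * e * t\<^sup>2 * D \<le> 4 * a * t\<^sup>2 * D"
    using e_le a D_pos t by (intro mult_right_mono) auto
  then have "4 * a * n - t * D \<le> (2 * a - e) * X"
    using ne unfolding X_def by (simp add: algebra_simps)
  moreover have "0 \<le> (2 * a - e) * X" using e_le a X_pos by simp
  moreover have "0 \<le> t * D" using t D_pos by simp
  ultimately have "max 0 (4 * a * n - 7 * t * D) \<le> (2 * a - e) * X" by simp
  then have "s * X \<le> (2 * a - e) * X" using s unfolding X_def by linarith
  then show ?thesis using X_pos unfolding e_def by simp
qed

locale multiplex =
  fixes N :: nat and L1 L2 :: "real mat"
  assumes N_pos: "0 < N"
    and L1_carrier: "L1 \<in> carrier_mat N N" and L2_carrier: "L2 \<in> carrier_mat N N"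
    and L1_sym: "L1\<^sup>T = L1" and L2_sym: "L2\<^sup>T = L2"
    and L1_ones: "L1 *\<^sub>v vec N (\<lambda>_. 1) = 0\<^sub>v N"
    and L2_ones: "L2 *\<^sub>v vec N (\<lambda>_. 1) = 0\<^sub>v N"
begin

abbreviation L :: "(nat \<Rightarrow> real) \<Rightarrow> real mat" where
  "L w \<equiv> multiplex_laplacian N L1 L2 w"

lemma L_carrier: "L w \<in> carrier_mat (2 * N) (2 * N)"
  using L1_carrier L2_carrier unfolding multiplex_laplacian_def diag_w_eq_mat_diag by (auto simp: mult_2)

lemma L_sym: "(L w)\<^sup>T = L w"
proof -
  have "(mat_diag N w)\<^sup>T = mat_diag N w" unfolding mat_diag_def by (auto intro!: eq_matI)
  then show ?thesis
    unfolding multiplex_laplacian_def diag_w_eq_mat_diag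
    using L1_carrier L2_carrier L1_sym L2_sym
    by (subst transpose_four_block_mat[of _ N N _ N _ N]) (auto simp: transpose_add transpose_uminus)
qed

lemma L_mult_append:
  assumes p: "p \<in> carrier_vec N" and q: "q \<in> carrier_vec N"
  shows "L w *\<^sub>v (p @\<^sub>v q) =
    (L1 *\<^sub>v p + vec N (\<lambda>i. w i * (p $ i - q $ i)))
      @\<^sub>v (L2 *\<^sub>v q + vec N (\<lambda>i. w i * (q $ i - p $ i)))"
proof -
  let ?W = "mat_diag N w"
  have W: "?W \<in> carrier_mat N N" by simp
  have blocks: "L1 + ?W \<in> carrier_mat N N" "- ?W \<in> carrier_mat N N" "L2 + ?W \<in> carrier_mat N N"
    using L1_carrier L2_carrier by auto
  have W_mult: "?W *\<^sub>v v = vec N (\<lambda>i. w i * v $ i)"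
      "(- ?W) *\<^sub>v v = vec N (\<lambda>i. - (w i * v $ i))"
    if v: "v \<in> carrier_vec N" for v
  proof -
    show "?W *\<^sub>v v = vec N (\<lambda>i. w i * v $ i)" using mat_diag_mult_vec[OF v] .
    moreover have "(- ?W) *\<^sub>v v = - (?W *\<^sub>v v)"
      using v by (intro uminus_mult_mat_vec) (simp add: mat_diag_def)
    ultimately show "(- ?W) *\<^sub>v v = vec N (\<lambda>i. - (w i * v $ i))" by auto
  qed
  have "L w *\<^sub>v (p @\<^sub>v q) =
      ((L1 + ?W) *\<^sub>v p + (- ?W) *\<^sub>v q) @\<^sub>v ((- ?W) *\<^sub>v p + (L2 + ?W) *\<^sub>v q)"
    unfolding multiplex_laplacian_def diag_w_eq_mat_diag
    by (rule four_block_mat_mult_vec[OF blocks(1,2,2,3) p q])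
  also have "(L1 + ?W) *\<^sub>v p + (- ?W) *\<^sub>v q
      = L1 *\<^sub>v p + vec N (\<lambda>i. w i * (p $ i - q $ i))"
    unfolding add_mult_distrib_mat_vec[OF L1_carrier W p] W_mult[OF p] W_mult[OF q]
    using L1_carrier p by (intro eq_vecI) (auto simp: algebra_simps)
  also have "(- ?W) *\<^sub>v p + (L2 + ?W) *\<^sub>v q
      = L2 *\<^sub>v q + vec N (\<lambda>i. w i * (q $ i - p $ i))"
    unfolding add_mult_distrib_mat_vec[OF L2_carrier W q] W_mult[OF p] W_mult[OF q]
    using L2_carrier q by (intro eq_vecI) (auto simp: algebra_simps)
  finally show ?thesis .
qed

lemma quad_form_L:
  assumes p: "p \<in> carrier_vec N" and q: "q \<in> carrier_vec N"
  shows "quad_form (L w) (p @\<^sub>v q)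
    = quad_form L1 p + quad_form L2 q + (\<Sum>i<N. w i * (p $ i - q $ i)\<^sup>2)"
proof -
  have "quad_form (L w) (p @\<^sub>v q) = quad_form L1 p + quad_form L2 q
      + (p \<bullet> vec N (\<lambda>i. w i * (p $ i - q $ i))
        + q \<bullet> vec N (\<lambda>i. w i * (q $ i - p $ i)))"
    unfolding quad_form_def L_mult_append[OF p q] using L1_carrier L2_carrier p q
    by (simp add: scalar_prod_append scalar_prod_add_distrib[of _ N])
  also have "p \<bullet> vec N (\<lambda>i. w i * (p $ i - q $ i))
        + q \<bullet> vec N (\<lambda>i. w i * (q $ i - p $ i))
      = (\<Sum>i<N. w i * (p $ i - q $ i)\<^sup>2)"
    using p q by (simp add: scalar_prod_def lessThan_atLeast0 sum.distrib[symmetric]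
        power2_eq_square algebra_simps)
  finally show ?thesis .
qed

lemma L_mult_ones: "L w *\<^sub>v (vec N (\<lambda>_. 1) @\<^sub>v vec N (\<lambda>_. 1)) = 0\<^sub>v (2 * N)"
  unfolding L_mult_append[OF vec_carrier vec_carrier] L1_ones L2_ones by (rule eq_vecI) auto

lemma quad_form_L_le_eig_max:
  assumes p: "p \<in> carrier_vec N" and q: "q \<in> carrier_vec N" and unit: "p \<bullet> p + q \<bullet> q = 1"
  shows "quad_form L1 p + quad_form L2 q + (\<Sum>i<N. w i * (p $ i - q $ i)\<^sup>2) \<le> eig (L w) (2 * N)"
proof -
  have x: "p @\<^sub>v q \<in> carrier_vec (2 * N)" using p q by (auto simp: mult_2)
  have "(p @\<^sub>v q) \<bullet> (p @\<^sub>v q) = 1" using scalar_prod_append[OF p q p q] unit by simp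
  then show ?thesis
    using quad_form_le_eig_max[OF L_carrier L_sym _ x] N_pos quad_form_L[OF p q] by simp
qed

lemma eig_2_L_le:
  assumes p: "p \<in> carrier_vec N"
  shows "eig (L w) 2 * (2 * (p \<bullet> p))
    \<le> max 0 (quad_form L1 p + quad_form L2 p + 4 * (\<Sum>i<N. w i * (p $ i)\<^sup>2))"
proof -
  let ?one = "vec N (\<lambda>_. 1 :: real)"
  have mp: "- p \<in> carrier_vec N" using p by simp
  have x: "p @\<^sub>v - p \<in> carrier_vec (2 * N)" using p by (auto simp: mult_2)
  have u: "?one @\<^sub>v ?one \<in> carrier_vec (2 * N)" by (auto simp: mult_2)
  have "(?one @\<^sub>v ?one) $ 0 \<noteq> 0\<^sub>v (2 * N) $ 0" using N_pos by simp
  then have u0: "?one @\<^sub>v ?one \<noteq> 0\<^sub>v (2 * N)" by metis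
  have "(p @\<^sub>v - p) \<bullet> (?one @\<^sub>v ?one) = 0"
    using scalar_prod_append[OF p mp vec_carrier vec_carrier] p by (simp add: scalar_prod_def sum_negf)
  from eig_2_le_quad_form[OF L_carrier L_sym _ u u0 L_mult_ones x this]
  have "eig (L w) 2 * ((p @\<^sub>v - p) \<bullet> (p @\<^sub>v - p))
      \<le> max 0 (quad_form (L w) (p @\<^sub>v - p))"
    using N_pos by simp
  moreover have "(p @\<^sub>v - p) \<bullet> (p @\<^sub>v - p) = 2 * (p \<bullet> p)"
    using scalar_prod_append[OF p mp p mp] p by simp
  moreover have "L2 *\<^sub>v (- p) = - (L2 *\<^sub>v p)" using p L2_carrier by (intro eq_vecI) auto
  then have "quad_form L2 (- p) = quad_form L2 p"
    unfolding quad_form_def using p L2_carrier by simp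
  moreover have "(\<Sum>i<N. w i * (p $ i - (- p) $ i)\<^sup>2) = 4 * (\<Sum>i<N. w i * (p $ i)\<^sup>2)"
    using p by (simp add: sum_distrib_left power2_eq_square algebra_simps)
  ultimately show ?thesis unfolding quad_form_L[OF p mp] by simp
qed

lemma quad_form_layer_const:
  "quad_form L1 (vec N (\<lambda>_. a)) = 0" "quad_form L2 (vec N (\<lambda>_. a)) = 0"
proof -
  have "vec N (\<lambda>_. a) = a \<cdot>\<^sub>v vec N (\<lambda>_. 1)" by auto
  then show "quad_form L1 (vec N (\<lambda>_. a)) = 0" "quad_form L2 (vec N (\<lambda>_. a)) = 0"
    unfolding quad_form_def using L1_carrier L2_carrier L1_ones L2_ones by (simp_all add: mult_mat_vec)
qed

lemma eig_max_L_ge: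
  assumes m: "\<forall>i<N. m \<le> w i"
  shows "max (eig L1 N) (eig L2 N) + m \<le> eig (L w) (2 * N)"
proof -
  have weighted: "m \<le> (\<Sum>i<N. w i * (v $ i)\<^sup>2)"
    if v: "v \<in> carrier_vec N" "v \<bullet> v = 1" for v
  proof -
    have "m = (\<Sum>i<N. m * (v $ i)\<^sup>2)"
      using v scalar_prod_self_eq_sum_squares[OF v(1)] by (simp add: sum_distrib_left[symmetric])
    also have "\<dots> \<le> (\<Sum>i<N. w i * (v $ i)\<^sup>2)" using m by (intro sum_mono mult_right_mono) auto
    finally show ?thesis .
  qed
  obtain v1 where v1: "v1 \<in> carrier_vec N" "v1 \<bullet> v1 = 1" "quad_form L1 v1 = eig L1 N"
    using eig_max_attained[OF L1_carrier L1_sym N_pos] by blast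
  obtain v2 where v2: "v2 \<in> carrier_vec N" "v2 \<bullet> v2 = 1" "quad_form L2 v2 = eig L2 N"
    using eig_max_attained[OF L2_carrier L2_sym N_pos] by blast
  have zero: "0\<^sub>v N \<in> carrier_vec N" "quad_form L1 (0\<^sub>v N) = 0" "quad_form L2 (0\<^sub>v N) = 0"
    unfolding quad_form_def using L1_carrier L2_carrier by auto
  have "eig L1 N + m \<le> eig (L w) (2 * N)"
    using quad_form_L_le_eig_max[OF v1(1) zero(1), of w] weighted[OF v1(1,2)] v1 zero by simp
  moreover have "eig L2 N + m \<le> eig (L w) (2 * N)"
    using quad_form_L_le_eig_max[OF zero(1) v2(1), of w] weighted[OF v2(1,2)] v2 zero by simp
  ultimately show ?thesis by simp
qed

lemma eig_2_L_le_mean_weight: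
  assumes w: "\<forall>i<N. 0 \<le> w i" and c: "(\<Sum>i<N. w i) = c"
  shows "eig (L w) 2 \<le> 2 * c / N"
proof -
  have "0 \<le> c" using w c by (metis lessThan_iff sum_nonneg)
  moreover have "eig (L w) 2 * (2 * N) \<le> max 0 (4 * c)"
    using eig_2_L_le[OF vec_carrier[of N "\<lambda>_. 1"], of w] quad_form_layer_const[of 1] c
    by (simp add: scalar_prod_def)
  ultimately show ?thesis using N_pos by (simp add: field_simps)
qed

lemma quad_form_layers_tilted:
  "quad_form L1 (vec N (\<lambda>i. 1 - t * f i)) + quad_form L2 (vec N (\<lambda>i. 1 - t * f i))
    \<le> t\<^sup>2 * ((\<bar>eig L1 N\<bar> + \<bar>eig L2 N\<bar>) * (\<Sum>i<N. (f i)\<^sup>2))"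
proof -
  define d where "d = vec N f"
  have d: "d \<in> carrier_vec N" "d \<bullet> d = (\<Sum>i<N. (f i)\<^sup>2)"
    unfolding d_def using scalar_prod_self_eq_sum_squares[of "vec N f"] by auto
  have p_eq: "vec N (\<lambda>i. 1 - t * f i) = 1 \<cdot>\<^sub>v vec N (\<lambda>_. 1) + (- t) \<cdot>\<^sub>v d"
    unfolding d_def by auto
  have layer:
    "quad_form L' (vec N (\<lambda>i. 1 - t * f i)) \<le> t\<^sup>2 * (\<bar>eig L' N\<bar> * (d \<bullet> d))"
    if L': "L' \<in> carrier_mat N N" "L'\<^sup>T = L'" "L' *\<^sub>v vec N (\<lambda>_. 1) = 0\<^sub>v N" for L'
  proof -
    have "quad_form L' (vec N (\<lambda>i. 1 - t * f i)) = t\<^sup>2 * quad_form L' d"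
      unfolding p_eq using quad_form_add_kernel[OF L'(1,2) vec_carrier L'(3) d(1), of 1 "- t"] by simp
    also have "quad_form L' d \<le> \<bar>eig L' N\<bar> * (d \<bullet> d)"
      using quad_form_le_eig_max[OF L'(1,2) N_pos d(1)]
        mult_right_mono[OF abs_ge_self scalar_prod_self_nonneg, of "eig L' N" d]
      by linarith
    then have "t\<^sup>2 * quad_form L' d \<le> t\<^sup>2 * (\<bar>eig L' N\<bar> * (d \<bullet> d))"
      by (simp add: mult_left_mono)
    finally show ?thesis .
  qed
  show ?thesis
    using layer[OF L1_carrier L1_sym L1_ones] layer[OF L2_carrier L2_sym L2_ones]
    unfolding d(2) by (simp add: algebra_simps)
qed

lemma eig_2_L_le_spread:
  assumes w: "\<forall>i<N. 0 \<le> w i" and c: "(\<Sum>i<N. w i) = c" "0 < c"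
    and spread: "(c / N)\<^sup>2 / 4 < (\<Sum>i<N. (w i - c / N)\<^sup>2)"
  shows "eig (L w) 2
    \<le> 2 * (c / N) - (c / N)\<^sup>2 / (8 * N * (\<bar>eig L1 N\<bar> + \<bar>eig L2 N\<bar> + 4 * c))"
proof -
  define a where "a = c / N"
  define B where "B = \<bar>eig L1 N\<bar> + \<bar>eig L2 N\<bar> + 4 * c"
  define t where "t = 1 / B"
  define D where "D = (\<Sum>i<N. (w i - a)\<^sup>2)"
  txt \<open>Tilting \<open>(1, -1)\<close> against the deviation of the weights from their mean lowers the
    Rayleigh quotient by an amount of the order of the spread \<open>D\<close>.\<close>
  define p where "p = vec N (\<lambda>i. 1 - t * (w i - a))"
  have a: "0 < a" "a * N = c" "a \<le> c"
    unfolding a_def using c N_pos divide_left_mono[of 1 "real N" c] by auto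
  have B: "0 < B" "4 * c \<le> B" unfolding B_def using c by auto
  have t: "0 < t" "t * B = 1" unfolding t_def using B by auto
  have "a * t \<le> 1" unfolding t_def using a B by (simp add: divide_le_eq_1)
  have p: "p \<in> carrier_vec N" unfolding p_def by simp
  have sums: "p \<bullet> p = N + t\<^sup>2 * D"
    "(\<Sum>i<N. w i * (p $ i)\<^sup>2) \<le> c - 2 * t * D + t\<^sup>2 * (c * D)"
    using sum_tilted_squares[OF w c(1) a(2), of t] scalar_prod_self_eq_sum_squares[OF p]
    unfolding p_def D_def by simp_all
  have "quad_form L1 p + quad_form L2 p + 4 * (\<Sum>i<N. w i * (p $ i)\<^sup>2)
      \<le> 4 * c - 8 * t * D + t\<^sup>2 * (B * D)"
    using quad_form_layers_tilted[of t "\<lambda>i. w i - a"] sums(2)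
    unfolding p_def[symmetric] D_def[symmetric] B_def by (simp add: algebra_simps)
  also have "t\<^sup>2 * (B * D) = t * D" using t by (simp add: power2_eq_square)
  finally have "eig (L w) 2 * (2 * real N + 2 * t\<^sup>2 * D) \<le> max 0 (4 * a * real N - 7 * t * D)"
    using eig_2_L_le[OF p, of w] a(2) unfolding sums(1) by (simp add: algebra_simps)
  moreover have "1 \<le> real N" using N_pos by simp
  moreover have "a\<^sup>2 / 4 < D" using spread unfolding a_def D_def .
  ultimately have "eig (L w) 2 \<le> 2 * a - t * a\<^sup>2 / (8 * real N)"
    using perturbation_quotient_bound a(1) t(1) \<open>a * t \<le> 1\<close> by blast
  then show ?thesis unfolding a_def t_def B_def by (simp add: mult.commute)
qed

definition width_gap :: "real \<Rightarrow> real" where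
  "width_gap c =
     min (c / N / 2) ((c / N)\<^sup>2 / (8 * N * (\<bar>eig L1 N\<bar> + \<bar>eig L2 N\<bar> + 4 * c)))"

lemma width_gap_pos: "0 < c \<Longrightarrow> 0 < width_gap c"
  unfolding width_gap_def using N_pos by (simp add: add_nonneg_pos)

lemma spectral_width_ge:
  assumes w: "\<forall>i<N. 0 \<le> w i" and c: "(\<Sum>i<N. w i) = c"
  shows "max (eig L1 N) (eig L2 N) - 2 * c / N \<le> eig (L w) (2 * N) - eig (L w) 2"
proof -
  have "max (eig L1 N) (eig L2 N) \<le> eig (L w) (2 * N)" using eig_max_L_ge[of 0 w] w by simp
  then show ?thesis using eig_2_L_le_mean_weight[OF w c] by linarith
qed

lemma spectral_width_gt:
  assumes w: "\<forall>i<N. 0 \<le> w i" and c: "(\<Sum>i<N. w i) = c" "0 < c"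
  shows "max (eig L1 N) (eig L2 N) - 2 * c / N + width_gap c \<le> eig (L w) (2 * N) - eig (L w) 2"
proof (cases "(\<Sum>i<N. (w i - c / N)\<^sup>2) \<le> (c / N)\<^sup>2 / 4")
  case True
  have "c / N / 2 \<le> w i" if i: "i < N" for i
  proof -
    have "(w i - c / N)\<^sup>2 \<le> (c / N / 2)\<^sup>2"
      using member_le_sum[of i "{..<N}" "\<lambda>i. (w i - c / N)\<^sup>2"] i True by (simp add: power_divide)
    then have "\<bar>w i - c / N\<bar> \<le> c / N / 2"
      using power2_le_imp_le[of "\<bar>w i - c / N\<bar>" "c / N / 2"] c(2) by simp
    then show ?thesis by linarith
  qed
  then have "max (eig L1 N) (eig L2 N) + c / N / 2 \<le> eig (L w) (2 * N)"
    using eig_max_L_ge by blast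
  moreover have "width_gap c \<le> c / N / 2" unfolding width_gap_def by simp
  ultimately show ?thesis using eig_2_L_le_mean_weight[OF w c(1)] by linarith
next
  case False
  then have "eig (L w) 2
      \<le> 2 * c / N - (c / N)\<^sup>2 / (8 * N * (\<bar>eig L1 N\<bar> + \<bar>eig L2 N\<bar> + 4 * c))"
    using eig_2_L_le_spread[OF w c] by simp
  moreover have
    "width_gap c \<le> (c / N)\<^sup>2 / (8 * N * (\<bar>eig L1 N\<bar> + \<bar>eig L2 N\<bar> + 4 * c))"
    unfolding width_gap_def by simp
  moreover have "max (eig L1 N) (eig L2 N) \<le> eig (L w) (2 * N)" using eig_max_L_ge[of 0 w] w by simp
  ultimately show ?thesis by linarith
qed

lemma H_ge:
  assumes c: "0 \<le> c"
  shows "max (eig L1 N) (eig L2 N) - 2 * c / N \<le> H N L1 L2 c"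
    and "0 < c \<Longrightarrow> max (eig L1 N) (eig L2 N) - 2 * c / N + width_gap c \<le> H N L1 L2 c"
proof -
  let ?S = "{w. (\<forall>i<N. w i \<ge> 0) \<and> (\<Sum>i<N. w i) = c}"
  have S: "?S \<noteq> {}" using c N_pos by (intro ex_in_conv[THEN iffD1] exI[of _ "\<lambda>_. c / N"]) auto
  show "max (eig L1 N) (eig L2 N) - 2 * c / N \<le> H N L1 L2 c"
    unfolding H_def by (rule cINF_greatest[OF S]) (auto intro: spectral_width_ge)
  show "max (eig L1 N) (eig L2 N) - 2 * c / N + width_gap c \<le> H N L1 L2 c" if "0 < c"
    unfolding H_def
  proof (rule cINF_greatest[OF S])
    fix w assume "w \<in> ?S"
    then show "max (eig L1 N) (eig L2 N) - 2 * c / N + width_gap c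
        \<le> eig (L w) (2 * N) - eig (L w) 2"
      using spectral_width_gt[OF _ _ that, of w] by blast
  qed
qed

end

theorem lemma1:
  fixes N :: nat and E1 E2 :: "nat \<Rightarrow> nat \<Rightarrow> bool" and c :: real
  assumes "N \<ge> 1"
    and "simple_graph N E1" and "simple_graph N E2"
    and "c \<ge> 0"
  shows "H N (laplacian N E1) (laplacian N E2) c
           \<ge> max (lambda_max (laplacian N E1)) (lambda_max (laplacian N E2)) - 2 * c / real N
         \<and> (c \<noteq> 0 \<longrightarrow> H N (laplacian N E1) (laplacian N E2) c
           > max (lambda_max (laplacian N E1)) (lambda_max (laplacian N E2)) - 2 * c / real N)"
proof -
  interpret multiplex N "laplacian N E1" "laplacian N E2"
    using assms by unfold_locales (auto simp: laplacian_symmetric laplacian_mult_ones)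
  have lambda_max: "lambda_max (laplacian N E) = eig (laplacian N E) N" for E
    unfolding lambda_max_def by (simp add: laplacian_def)
  have "c \<noteq> 0 \<Longrightarrow> 0 < width_gap c" using assms(4) width_gap_pos by simp
  then show ?thesis
    unfolding lambda_max using H_ge[OF assms(4)] assms(4) by fastforce
qed

end
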